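(* Let $(X,T)$ be a topological dynamical system and let $K$ be a compact subset of $X$. Then $K$ has bounded topological complexity with respect to $\{\hat d_n\}$ if and only if $K$ is equicontinuous in the mean.
   Context: A t.d.s. $(X,T)$ consists of a compact metric space $(X,d)$ and a continuous map $T\colon X\to X$. For $n\in\mathbb{N}$ and $x,y\in X$ let $\bar d_n(x,y)=\frac1n\sum_{i=0}^{n-1}d(T^ix,T^iy)$ and $\hat d_n(x,y)=\max\{\bar d_k(x,y)\colon 1\le k\le n\}$; $B_{\hat d_n}(x,\varepsilon)=\{y\colon \hat d_n(x,y)<\varepsilon\}$. For $K\subset X$, $\widehat{\mathrm{span}}_K(n,\varepsilon)=\min\{\#(F)\colon F\subset K,\ K\subset\bigcup_{x\in F}B_{\hat d_n}(x,\varepsilon)\}$. $K$ has bounded topological complexity with respect to $\{\hat d_n\}$ if for every $\varepsilon>0$ there is a positive integer $C$ with $\widehat{\mathrm{span}}_K(n,\varepsilon)\le C$ for all $n\ge1$. $K$ is equicontinuous in the mean if for every $\varepsilon>0$ there is $\delta>0$ such that $\hat d_n(x,y)<\varepsilon$ for all $n\ge1$ and all $x,y\in K$ with $d(x,y)<\delta$. *)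

theory Defs
  imports "HOL-Analysis.Analysis"
begin

definition tds :: "'a::metric_space set \<Rightarrow> ('a \<Rightarrow> 'a) \<Rightarrow> bool" where
  "tds X T \<longleftrightarrow> compact X \<and> continuous_on X T \<and> T ` X \<subseteq> X"

definition dbar :: "('a::metric_space \<Rightarrow> 'a) \<Rightarrow> nat \<Rightarrow> 'a \<Rightarrow> 'a \<Rightarrow> real" where
  "dbar T n x y = (1 / real n) * (\<Sum>i<n. dist ((T ^^ i) x) ((T ^^ i) y))"

definition dhat :: "('a::metric_space \<Rightarrow> 'a) \<Rightarrow> nat \<Rightarrow> 'a \<Rightarrow> 'a \<Rightarrow> real" where
  "dhat T n x y = Max ((\<lambda>k. dbar T k x y) ` {1..n})"

definition ball_dhat :: "('a::metric_space \<Rightarrow> 'a) \<Rightarrow> nat \<Rightarrow> 'a \<Rightarrow> real \<Rightarrow> 'a set" where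
  "ball_dhat T n x e = {y. dhat T n x y < e}"

definition span_hat :: "('a::metric_space \<Rightarrow> 'a) \<Rightarrow> 'a set \<Rightarrow> nat \<Rightarrow> real \<Rightarrow> nat" where
  "span_hat T K n e = (LEAST m. \<exists>F. F \<subseteq> K \<and> finite F \<and> card F = m \<and>
       K \<subseteq> (\<Union>x\<in>F. ball_dhat T n x e))"

text \<open>Bounded topological complexity. We require explicitly that a finite spanning set exists
  (so that the minimum is attained) together with the bound on its minimal size.\<close>
definition bounded_complexity :: "('a::metric_space \<Rightarrow> 'a) \<Rightarrow> 'a set \<Rightarrow> bool" where
  "bounded_complexity T K \<longleftrightarrow> (\<forall>e>0. \<exists>C::nat. C > 0 \<and> (\<forall>n\<ge>1.
      (\<exists>F. F \<subseteq> K \<and> finite F \<and> K \<subseteq> (\<Union>x\<in>F. ball_dhat T n x e)) \<and>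
      span_hat T K n e \<le> C))"

definition equicontinuous_in_mean :: "('a::metric_space \<Rightarrow> 'a) \<Rightarrow> 'a set \<Rightarrow> bool" where
  "equicontinuous_in_mean T K \<longleftrightarrow> (\<forall>e>0. \<exists>d>0. \<forall>n\<ge>1. \<forall>x\<in>K. \<forall>y\<in>K.
      dist x y < d \<longrightarrow> dhat T n x y < e)"

end

theory Submission
  imports Defs
begin

text \<open>Each \<open>dhat T n\<close> is a pseudometric with \<open>dhat T n x y \<le> \<Sum>i<n. dist (T\<^sup>i x) (T\<^sup>i y)\<close>,
  so it is continuous, and it increases with \<open>n\<close>.
  If \<open>K\<close> is equicontinuous in the mean, a finite \<open>\<delta>\<close>-net of \<open>K\<close> for \<open>dist\<close> is an \<open>\<epsilon>\<close>-net for
  every \<open>dhat T n\<close> at once.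
  Conversely, if mean equicontinuity fails at some \<open>x \<in> K\<close> for \<open>\<epsilon>\<close>, then points arbitrarily
  close to \<open>x\<close> are \<open>\<epsilon>\<close>-far from \<open>x\<close> for some \<open>dhat T n\<close>, while continuity of \<open>dhat T N x\<close> keeps
  them close to \<open>x\<close> for any fixed \<open>N\<close>. Adding such points one at a time yields, for every \<open>k\<close>,
  a \<open>dhat T N\<close>-separated subset of \<open>K\<close> with \<open>k\<close> elements, which no bounded number of
  \<open>dhat T N\<close>-balls can cover. Pointwise mean equicontinuity becomes uniform on the compact
  set \<open>K\<close>, since the functions \<open>dhat T n z\<close> are equicontinuous there.\<close>

lemma dbar_commute: "dbar T k x y = dbar T k y x"
  unfolding dbar_def by (simp add: dist_commute)

lemma dbar_triangle: "dbar T k x y \<le> dbar T k x z + dbar T k z y"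
proof -
  have "(\<Sum>i<k. dist ((T ^^ i) x) ((T ^^ i) y))
      \<le> (\<Sum>i<k. dist ((T ^^ i) x) ((T ^^ i) z) + dist ((T ^^ i) z) ((T ^^ i) y))"
    by (intro sum_mono dist_triangle)
  then show ?thesis
    unfolding dbar_def by (simp add: sum.distrib add_divide_distrib[symmetric] divide_right_mono)
qed

lemma dbar_le_sum_dist:
  assumes "1 \<le> k"
  shows "dbar T k x y \<le> (\<Sum>i<k. dist ((T ^^ i) x) ((T ^^ i) y))"
proof -
  have "0 \<le> (\<Sum>i<k. dist ((T ^^ i) x) ((T ^^ i) y))" by (simp add: sum_nonneg)
  from mult_right_mono[OF _ this, of 1 "real k"] assms show ?thesis
    unfolding dbar_def by (simp add: divide_le_eq mult.commute)
qed

lemma dbar_le_dhat: "1 \<le> k \<Longrightarrow> k \<le> n \<Longrightarrow> dbar T k x y \<le> dhat T n x y"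
  unfolding dhat_def by (intro Max_ge) auto

lemma dhat_eq_dbar:
  assumes "1 \<le> n"
  obtains k where "1 \<le> k" "k \<le> n" "dhat T n x y = dbar T k x y"
proof -
  have "dhat T n x y \<in> (\<lambda>k. dbar T k x y) ` {1..n}"
    unfolding dhat_def using assms by (intro Max_in) auto
  then show ?thesis using that by auto
qed

lemma dhat_commute: "dhat T n x y = dhat T n y x"
  unfolding dhat_def by (simp add: dbar_commute)

lemma dhat_self:
  assumes "1 \<le> n"
  shows "dhat T n x x = 0"
proof -
  obtain k where "dhat T n x x = dbar T k x x" using dhat_eq_dbar[OF assms] .
  then show ?thesis by (simp add: dbar_def)
qed

lemma dhat_triangle:
  assumes "1 \<le> n"
  shows "dhat T n x y \<le> dhat T n x z + dhat T n z y"
proof -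
  obtain k where k: "1 \<le> k" "k \<le> n" "dhat T n x y = dbar T k x y"
    using dhat_eq_dbar[OF assms] .
  have "dbar T k x y \<le> dbar T k x z + dbar T k z y" by (rule dbar_triangle)
  also have "\<dots> \<le> dhat T n x z + dhat T n z y"
    using k by (intro add_mono dbar_le_dhat)
  finally show ?thesis using k by simp
qed

lemma dhat_mono:
  assumes "1 \<le> n" "n \<le> m"
  shows "dhat T n x y \<le> dhat T m x y"
proof -
  obtain k where "1 \<le> k" "k \<le> n" "dhat T n x y = dbar T k x y"
    using dhat_eq_dbar[OF assms(1)] .
  with assms(2) show ?thesis using dbar_le_dhat[of k m T x y] by simp
qed

lemma dhat_le_sum_dist:
  assumes "1 \<le> n"
  shows "dhat T n x y \<le> (\<Sum>i<n. dist ((T ^^ i) x) ((T ^^ i) y))"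
proof -
  obtain k where k: "1 \<le> k" "k \<le> n" "dhat T n x y = dbar T k x y"
    using dhat_eq_dbar[OF assms] .
  have "dbar T k x y \<le> (\<Sum>i<k. dist ((T ^^ i) x) ((T ^^ i) y))"
    using k(1) by (rule dbar_le_sum_dist)
  also have "\<dots> \<le> (\<Sum>i<n. dist ((T ^^ i) x) ((T ^^ i) y))"
    using k(2) by (intro sum_mono2) auto
  finally show ?thesis using k(3) by simp
qed

lemma funpow_image_subset: "T ` X \<subseteq> X \<Longrightarrow> (T ^^ i) ` X \<subseteq> X"
  by (induction i) auto

lemma continuous_on_funpow:
  assumes "continuous_on X T" "T ` X \<subseteq> X"
  shows "continuous_on X (T ^^ i)"
proof (induction i)
  case (Suc i)
  have "continuous_on X (T \<circ> (T ^^ i))"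
    using Suc continuous_on_subset[OF assms(1) funpow_image_subset[OF assms(2)]]
    by (rule continuous_on_compose)
  then show ?case by simp
qed simp

lemma dhat_small_near:
  assumes "continuous_on X T" "T ` X \<subseteq> X" "x \<in> X" "1 \<le> n" "0 < e"
  obtains d where "0 < d" "\<And>y. y \<in> X \<Longrightarrow> dist y x < d \<Longrightarrow> dhat T n x y < e"
proof -
  define f where "f y = (\<Sum>i<n. dist ((T ^^ i) x) ((T ^^ i) y))" for y
  have "continuous_on X f"
    unfolding f_def using continuous_on_funpow[OF assms(1,2)]
    by (intro continuous_on_sum continuous_on_dist continuous_on_const) auto
  then obtain d where d: "0 < d" "\<And>y. y \<in> X \<Longrightarrow> dist y x < d \<Longrightarrow> dist (f y) (f x) < e"
    using assms(3,5) unfolding continuous_on_iff by blast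
  have "dhat T n x y < e" if "y \<in> X" "dist y x < d" for y
  proof -
    have "f y < e" using d(2)[OF that] by (simp add: f_def dist_real_def)
    then show ?thesis using dhat_le_sum_dist[OF assms(4), of T x y] unfolding f_def by linarith
  qed
  with d(1) show ?thesis using that by blast
qed

lemma span_hat_le_card:
  "F \<subseteq> K \<Longrightarrow> finite F \<Longrightarrow> K \<subseteq> (\<Union>x\<in>F. ball_dhat T n x e) \<Longrightarrow> span_hat T K n e \<le> card F"
  unfolding span_hat_def by (rule Least_le) blast

lemma span_hat_attained:
  assumes "F \<subseteq> K" "finite F" "K \<subseteq> (\<Union>x\<in>F. ball_dhat T n x e)"
  obtains G where "G \<subseteq> K" "finite G" "card G = span_hat T K n e"
    "K \<subseteq> (\<Union>x\<in>G. ball_dhat T n x e)"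
proof -
  have "\<exists>m G. G \<subseteq> K \<and> finite G \<and> card G = m \<and> K \<subseteq> (\<Union>x\<in>G. ball_dhat T n x e)"
    using assms by blast
  from LeastI_ex[OF this] show ?thesis
    using that unfolding span_hat_def by blast
qed

definition dhat_separated :: "('a::metric_space \<Rightarrow> 'a) \<Rightarrow> nat \<Rightarrow> real \<Rightarrow> 'a set \<Rightarrow> bool" where
  "dhat_separated T n r S \<longleftrightarrow> (\<forall>u\<in>S. \<forall>w\<in>S. u \<noteq> w \<longrightarrow> r \<le> dhat T n u w)"

lemma dhat_separated_mono:
  "1 \<le> n \<Longrightarrow> n \<le> m \<Longrightarrow> dhat_separated T n r S \<Longrightarrow> dhat_separated T m r S"
  unfolding dhat_separated_def by (meson dhat_mono order.trans)

lemma dhat_separated_insert: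
  "dhat_separated T n r S \<Longrightarrow> (\<And>u. u \<in> S \<Longrightarrow> r \<le> dhat T n u y)
    \<Longrightarrow> dhat_separated T n r (insert y S)"
  unfolding dhat_separated_def by (auto simp: dhat_commute)

text \<open>Two points of a \<open>2r\<close>-separated set cannot share an \<open>r\<close>-ball.\<close>

lemma card_dhat_separated_le:
  assumes "1 \<le> n" "dhat_separated T n (2 * r) S" "finite F"
    and "S \<subseteq> (\<Union>x\<in>F. ball_dhat T n x r)"
  shows "card S \<le> card F"
proof -
  have "\<forall>u\<in>S. \<exists>z. z \<in> F \<and> dhat T n z u < r"
    using assms(4) unfolding ball_dhat_def by blast
  then obtain g where g: "\<And>u. u \<in> S \<Longrightarrow> g u \<in> F \<and> dhat T n (g u) u < r"
    by (auto dest!: bchoice)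
  have "inj_on g S"
  proof (rule inj_onI, rule ccontr)
    fix u w assume uw: "u \<in> S" "w \<in> S" "g u = g w" "u \<noteq> w"
    have "dhat T n u w \<le> dhat T n (g u) u + dhat T n (g u) w"
      using dhat_triangle[OF assms(1), of T u w "g u"] by (simp add: dhat_commute)
    also have "\<dots> < 2 * r" using g[OF uw(1)] g[OF uw(2)] uw(3) by simp
    finally show False using assms(2) uw unfolding dhat_separated_def by fastforce
  qed
  then show ?thesis using g assms(3) by (intro card_inj_on_le) auto
qed

lemma bounded_complexity_imp_span_le:
  assumes "bounded_complexity T K" "0 < e"
  obtains C :: nat where "\<And>n. 1 \<le> n \<Longrightarrow>
    \<exists>F. F \<subseteq> K \<and> finite F \<and> card F \<le> C \<and> K \<subseteq> (\<Union>x\<in>F. ball_dhat T n x e)"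
proof -
  obtain C :: nat where C: "\<And>n. 1 \<le> n \<Longrightarrow>
      (\<exists>F. F \<subseteq> K \<and> finite F \<and> K \<subseteq> (\<Union>x\<in>F. ball_dhat T n x e)) \<and> span_hat T K n e \<le> C"
    using assms(1)[unfolded bounded_complexity_def, rule_format, OF assms(2)] by blast
  show ?thesis
  proof (rule that)
    fix n :: nat assume n: "1 \<le> n"
    obtain F where F: "F \<subseteq> K" "finite F" "K \<subseteq> (\<Union>x\<in>F. ball_dhat T n x e)"
      using C[OF n] by blast
    obtain G where "G \<subseteq> K" "finite G" "card G = span_hat T K n e"
      "K \<subseteq> (\<Union>x\<in>G. ball_dhat T n x e)"
      by (rule span_hat_attained[OF F])
    with C[OF n] show "\<exists>F. F \<subseteq> K \<and> finite F \<and> card F \<le> C \<and> K \<subseteq> (\<Union>x\<in>F. ball_dhat T n x e)"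
      by (intro exI[of _ G]) simp
  qed
qed

text \<open>The induction invariant also keeps all points \<open>e\<close>-far from \<open>x\<close>; a new point \<open>y\<close>, chosen
  \<open>dhat T N\<close>-close to \<open>x\<close> but \<open>e\<close>-far from it for a larger time, is then \<open>e/2\<close>-far from them.\<close>

lemma large_dhat_separated_sets:
  assumes "continuous_on X T" "T ` X \<subseteq> X" "K \<subseteq> X" "x \<in> K" "0 < e"
    and far: "\<And>d. 0 < d \<Longrightarrow> \<exists>y\<in>K. dist y x < d \<and> (\<exists>n\<ge>1. e \<le> dhat T n x y)"
  shows "\<exists>N\<ge>1. \<exists>S\<subseteq>K. finite S \<and> card S = k \<and> (\<forall>u\<in>S. e \<le> dhat T N x u)
           \<and> dhat_separated T N (e/2) S"
proof (induction k)
  case 0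
  have "dhat_separated T 1 (e/2) {}" by (simp add: dhat_separated_def)
  then show ?case by (metis card.empty empty_iff empty_subsetI finite.emptyI order_refl)
next
  case (Suc k)
  then obtain N S where N: "1 \<le> N" and S: "S \<subseteq> K" "finite S" "card S = k"
    "\<And>u. u \<in> S \<Longrightarrow> e \<le> dhat T N x u" "dhat_separated T N (e/2) S"
    by blast
  obtain d where d: "0 < d" "\<And>y. y \<in> X \<Longrightarrow> dist y x < d \<Longrightarrow> dhat T N x y < e/2"
    using dhat_small_near[OF assms(1,2) subsetD[OF assms(3,4)] N half_gt_zero[OF assms(5)]] by blast
  obtain y n where y: "y \<in> K" "dist y x < d" "1 \<le> n" "e \<le> dhat T n x y"
    using far[OF d(1)] by blast
  have yN: "dhat T N x y < e/2" using d(2) y(1,2) assms(3) by blast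
  define M where "M = max N n"
  have M: "1 \<le> M" "N \<le> M" "n \<le> M" using N unfolding M_def by auto
  have "y \<notin> S"
  proof
    assume "y \<in> S"
    then have "e \<le> dhat T N x y" by (rule S(4))
    with yN assms(5) show False by linarith
  qed
  have "e/2 \<le> dhat T N u y" if "u \<in> S" for u
    using dhat_triangle[OF N, of T x u y] dhat_commute[of T N y u] S(4)[OF that] yN by linarith
  then have sep: "dhat_separated T N (e/2) (insert y S)"
    by (rule dhat_separated_insert[OF S(5)])
  moreover have "e \<le> dhat T M x u" if "u \<in> insert y S" for u
  proof (cases "u = y")
    case True
    then show ?thesis using y(4) dhat_mono[OF y(3) M(3), of T x y] by simp
  next
    case False
    with that have "u \<in> S" by simp
    then show ?thesis using S(4) dhat_mono[OF N M(2), of T x u] by fastforce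
  qed
  moreover have "insert y S \<subseteq> K" "finite (insert y S)" "card (insert y S) = Suc k"
    using S y(1) \<open>y \<notin> S\<close> by auto
  ultimately show ?case
    using M(1) dhat_separated_mono[OF N M(2) sep] by blast
qed

lemma bounded_complexity_imp_dhat_small_near:
  assumes "continuous_on X T" "T ` X \<subseteq> X" "K \<subseteq> X" "bounded_complexity T K"
    and "x \<in> K" "0 < e"
  shows "\<exists>d>0. \<forall>y\<in>K. dist y x < d \<longrightarrow> (\<forall>n\<ge>1. dhat T n x y < e)"
proof (rule ccontr)
  assume "\<not> ?thesis"
  then have far: "\<exists>y\<in>K. dist y x < d \<and> (\<exists>n\<ge>1. e \<le> dhat T n x y)" if "0 < d" for d
    using that by (meson not_le)
  obtain C :: nat where C: "\<And>n. 1 \<le> n \<Longrightarrow>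
      \<exists>F. F \<subseteq> K \<and> finite F \<and> card F \<le> C \<and> K \<subseteq> (\<Union>x\<in>F. ball_dhat T n x (e/4))"
    using bounded_complexity_imp_span_le[OF assms(4)] assms(6) by (metis zero_less_divide_iff zero_less_numeral)
  obtain N S where N: "1 \<le> N" and S: "S \<subseteq> K" "card S = Suc C" "dhat_separated T N (e/2) S"
    using large_dhat_separated_sets[OF assms(1-3,5,6) far, of "Suc C"] by blast
  obtain F where F: "finite F" "card F \<le> C" "K \<subseteq> (\<Union>x\<in>F. ball_dhat T N x (e/4))"
    using C[OF N] by blast
  have "dhat_separated T N (2 * (e/4)) S" using S(3) by simp
  moreover have "S \<subseteq> (\<Union>x\<in>F. ball_dhat T N x (e/4))" using S(1) F(3) by blast
  ultimately have "card S \<le> card F" using F(1) card_dhat_separated_le[OF N] by blast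
  with S(2) F(2) show False by simp
qed

lemma equicontinuous_in_mean_if_pointwise:
  fixes T :: "'a::metric_space \<Rightarrow> 'a"
  assumes "compact K"
    and pointwise: "\<And>x e. x \<in> K \<Longrightarrow> 0 < e \<Longrightarrow>
      \<exists>d>0. \<forall>y\<in>K. dist y x < d \<longrightarrow> (\<forall>n\<ge>1. dhat T n x y < e)"
  shows "equicontinuous_in_mean T K"
  unfolding equicontinuous_in_mean_def
proof (intro allI impI)
  fix e :: real assume "0 < e"
  define \<F> where "\<F> = {dhat T n z | n z. 1 \<le> n}"
  have equicont: "\<exists>d>0. \<forall>f\<in>\<F>. \<forall>y\<in>K. dist y x < d \<longrightarrow> dist (f y) (f x) < \<epsilon>"
    if x: "x \<in> K" "0 < \<epsilon>" for x \<epsilon>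
  proof -
    obtain d where d: "0 < d" "\<forall>y\<in>K. dist y x < d \<longrightarrow> (\<forall>n\<ge>1. dhat T n x y < \<epsilon>)"
      using pointwise[OF x] by blast
    have "dist (dhat T n z y) (dhat T n z x) < \<epsilon>"
      if "1 \<le> n" "y \<in> K" "dist y x < d" for n z y
    proof -
      have "dhat T n x y < \<epsilon>" "dhat T n y x = dhat T n x y"
        using d(2) that by (auto intro: dhat_commute)
      then show ?thesis
        using dhat_triangle[OF that(1), of T z y x] dhat_triangle[OF that(1), of T z x y]
        unfolding dist_real_def by linarith
    qed
    with d(1) show ?thesis unfolding \<F>_def by blast
  qed
  obtain d where d: "0 < d"
    "\<And>f x y. f \<in> \<F> \<Longrightarrow> x \<in> K \<Longrightarrow> y \<in> K \<Longrightarrow> dist y x < d \<Longrightarrow> dist (f y) (f x) < e"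
    using compact_uniformly_equicontinuous[OF assms(1) equicont \<open>0 < e\<close>] by blast
  have "dhat T n x y < e" if "1 \<le> n" "x \<in> K" "y \<in> K" "dist x y < d" for n x y
  proof -
    have "dhat T n x \<in> \<F>" using that(1) unfolding \<F>_def by blast
    with d(2) that(2-4) have "dist (dhat T n x y) (dhat T n x x) < e"
      by (simp add: dist_commute)
    then show ?thesis using dhat_self[OF that(1), of T x] by (simp add: dist_real_def)
  qed
  with d(1) show "\<exists>d>0. \<forall>n\<ge>1. \<forall>x\<in>K. \<forall>y\<in>K. dist x y < d \<longrightarrow> dhat T n x y < e"
    by blast
qed

lemma equicontinuous_in_mean_imp_bounded_complexity:
  assumes "compact K" "equicontinuous_in_mean T K"
  shows "bounded_complexity T K"
  unfolding bounded_complexity_def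
proof (intro allI impI)
  fix e :: real assume "0 < e"
  obtain d where "0 < d" and d: "\<forall>n\<ge>1. \<forall>x\<in>K. \<forall>y\<in>K. dist x y < d \<longrightarrow> dhat T n x y < e"
    using assms(2)[unfolded equicontinuous_in_mean_def, rule_format, OF \<open>0 < e\<close>] by blast
  obtain F where F: "finite F" "F \<subseteq> K" "K \<subseteq> (\<Union>x\<in>F. ball x d)"
    using seq_compact_imp_totally_bounded[OF compact_imp_seq_compact[OF assms(1)], rule_format, OF \<open>0 < d\<close>]
    by blast
  have cover: "K \<subseteq> (\<Union>x\<in>F. ball_dhat T n x e)" if "1 \<le> n" for n
  proof
    fix y assume "y \<in> K"
    then obtain x where "x \<in> F" "dist x y < d" using F(3) by auto
    then have "dhat T n x y < e" using d that \<open>y \<in> K\<close> F(2) by blast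
    with \<open>x \<in> F\<close> show "y \<in> (\<Union>x\<in>F. ball_dhat T n x e)" unfolding ball_dhat_def by blast
  qed
  show "\<exists>C::nat. C > 0 \<and> (\<forall>n\<ge>1. (\<exists>F. F \<subseteq> K \<and> finite F \<and> K \<subseteq> (\<Union>x\<in>F. ball_dhat T n x e))
      \<and> span_hat T K n e \<le> C)"
  proof (intro exI[of _ "Suc (card F)"] conjI allI impI)
    fix n :: nat assume "1 \<le> n"
    show "\<exists>F. F \<subseteq> K \<and> finite F \<and> K \<subseteq> (\<Union>x\<in>F. ball_dhat T n x e)"
      using F(1,2) cover[OF \<open>1 \<le> n\<close>] by blast
    show "span_hat T K n e \<le> Suc (card F)"
      using span_hat_le_card[OF F(2,1) cover[OF \<open>1 \<le> n\<close>]] by simp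
  qed simp
qed

theorem mainTheorem3:
  fixes X K :: "'a::metric_space set" and T :: "'a \<Rightarrow> 'a"
  assumes "tds X T" and "K \<subseteq> X" and "compact K"
  shows "bounded_complexity T K \<longleftrightarrow> equicontinuous_in_mean T K"
proof
  have T: "continuous_on X T" "T ` X \<subseteq> X" using assms(1) unfolding tds_def by auto
  assume "bounded_complexity T K"
  from bounded_complexity_imp_dhat_small_near[OF T assms(2) this]
  show "equicontinuous_in_mean T K"
    by (rule equicontinuous_in_mean_if_pointwise[OF assms(3)])
next
  assume "equicontinuous_in_mean T K"
  with assms(3) show "bounded_complexity T K"
    by (rule equicontinuous_in_mean_imp_bounded_complexity)
qed

end
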